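(* Let $A\in\mathbb{R}^{n\times n}$, $b\in\mathbb{R}^n$, and $\mathcal{U}=[\underline{u},\overline{u}]\subset\mathbb{R}$ with $\underline{u}<\overline{u}$. Consider the system $x[i+1]=Ax[i]+bu[i]$, $x[0]=0$, with $u[i]\in\mathcal{U}$ for all $i\in\mathbb{Z}_{\ge 0}$, and let $\mathcal{R}(i,0)$ denote its reachable set at time $i$ (with $\mathcal{R}(0,0)=\{0\}$). Then for every $i\in\mathbb{N}$, $$A^{i-1}b\,\mathcal{U}=\mathcal{R}(i,0)\ominus\mathcal{R}(i-1,0).$$
   Context: The reachable set at time $i$ is $\mathcal{R}(i,0)=\{\phi_u(i;0)\mid u:\mathbb{Z}_{\ge0}\to\mathcal{U}\}$, where $\phi_u(\cdot;0)$ is the trajectory of the system with initial state $0$ under the input sequence $u$. For $B\in\mathbb{R}^{n\times m}$ and $\mathcal{X}\subset\mathbb{R}^m$, $B\mathcal{X}=\{Bx\mid x\in\mathcal{X}\}$. For $\mathcal{A},\mathcal{B}\subset\mathbb{R}^n$, the Minkowski sum is $\mathcal{A}\oplus\mathcal{B}=\{a+b\mid a\in\mathcal{A},b\in\mathcal{B}\}$ and the Minkowski difference is $\mathcal{A}\ominus\mathcal{B}=\{c\in\mathbb{R}^n\mid \{c\}\oplus\mathcal{B}\subseteq\mathcal{A}\}$. *)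

theory Defs
  imports "HOL-Analysis.Analysis"
begin

text \<open>Matrix power (the power operator on vec is componentwise, so we define it).\<close>
primrec matpow :: "real^'n^'n \<Rightarrow> nat \<Rightarrow> real^'n^'n" where
  "matpow A 0 = mat 1"
| "matpow A (Suc k) = matpow A k ** A"

primrec traj :: "real^'n^'n \<Rightarrow> real^'n \<Rightarrow> (nat \<Rightarrow> real) \<Rightarrow> real^'n \<Rightarrow> nat \<Rightarrow> real^'n" where
  "traj A b u x0 0 = x0"
| "traj A b u x0 (Suc i) = A *v traj A b u x0 i + u i *\<^sub>R b"

definition reach :: "real^'n^'n \<Rightarrow> real^'n \<Rightarrow> real set \<Rightarrow> nat \<Rightarrow> (real^'n) set" where
  "reach A b U i = {traj A b u 0 i | u. \<forall>k. u k \<in> U}"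

definition msum :: "'a::ab_group_add set \<Rightarrow> 'a set \<Rightarrow> 'a set" where
  "msum X Y = {x + y | x y. x \<in> X \<and> y \<in> Y}"

definition mdiff :: "'a::ab_group_add set \<Rightarrow> 'a set \<Rightarrow> 'a set" where
  "mdiff X Y = {c. msum {c} Y \<subseteq> X}"

end

theory Submission
  imports Defs
begin

text \<open>Splitting off the first input shows
  \<open>\<R>(i,0) = A^(i-1) b \<U> \<oplus> \<R>(i-1,0)\<close>,
  so the theorem is an instance of the cancellation law
  \<open>(P \<oplus> Q) \<ominus> Q = P\<close> for closed convex \<open>P\<close> and bounded nonempty \<open>Q\<close>.
  For the latter: if \<open>c \<oplus> Q \<subseteq> P \<oplus> Q\<close>, iterating \<open>m\<close> times from some \<open>q\<^sub>0 \<in> Q\<close>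
  gives \<open>m c + q\<^sub>0 = p\<^sub>1 + \<dots> + p\<^sub>m + q'\<close>; the average of the \<open>p\<^sub>j\<close> lies in \<open>P\<close> by
  convexity and differs from \<open>c\<close> by \<open>(q' - q\<^sub>0) / m\<close>, which tends to \<open>0\<close> as \<open>Q\<close>
  is bounded. Closedness of \<open>P\<close> then gives \<open>c \<in> P\<close>.\<close>

lemma subset_mdiff_msum: "P \<subseteq> mdiff (msum P Q) Q"
  unfolding mdiff_def msum_def by auto

lemma mdiff_msum_multiple:
  fixes P Q :: "'a::real_vector set"
  assumes "convex P" and c: "c \<in> mdiff (msum P Q) Q" and "q \<in> Q"
  shows "\<exists>p\<in>P. \<exists>q'\<in>Q. real (Suc m) *\<^sub>R c + q = real (Suc m) *\<^sub>R p + q'"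
proof (induction m)
  case 0
  have "c + q \<in> msum P Q"
    using c \<open>q \<in> Q\<close> unfolding mdiff_def msum_def by blast
  then show ?case unfolding msum_def by auto
next
  case (Suc m)
  then obtain p q' where "p \<in> P" "q' \<in> Q"
    and p: "real (Suc m) *\<^sub>R c + q = real (Suc m) *\<^sub>R p + q'" by blast
  have "c + q' \<in> msum P Q"
    using c \<open>q' \<in> Q\<close> unfolding mdiff_def msum_def by blast
  then obtain p' q'' where "p' \<in> P" "q'' \<in> Q" and p': "c + q' = p' + q''"
    unfolding msum_def by blast
  define n where "n = real (Suc (Suc m))"
  define avg where "avg = (real (Suc m) / n) *\<^sub>R p + (1 / n) *\<^sub>R p'"
  have avg_in: "avg \<in> P"
    unfolding avg_def n_def using \<open>convex P\<close> \<open>p \<in> P\<close> \<open>p' \<in> P\<close>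
    by (intro convexD) (auto simp: field_simps)
  have avg_eq: "n *\<^sub>R avg = real (Suc m) *\<^sub>R p + p'"
    unfolding avg_def n_def by (simp add: scaleR_add_right)
  have "n *\<^sub>R c + q = n *\<^sub>R avg + q''"
  proof -
    have "n *\<^sub>R c + q = c + (real (Suc m) *\<^sub>R c + q)"
      unfolding n_def by (simp add: algebra_simps scaleR_2)
    also have "\<dots> = real (Suc m) *\<^sub>R p + (c + q')"
      using p by (simp add: algebra_simps)
    finally show ?thesis
      using p' avg_eq by (simp add: algebra_simps)
  qed
  then show ?case
    using avg_in \<open>q'' \<in> Q\<close> unfolding n_def by blast
qed

lemma mdiff_msum_cancel:
  fixes P Q :: "'a::real_normed_vector set"
  assumes "closed P" "convex P" "bounded Q" "Q \<noteq> {}"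
  shows "mdiff (msum P Q) Q = P"
proof
  show "mdiff (msum P Q) Q \<subseteq> P"
  proof
    fix c assume c: "c \<in> mdiff (msum P Q) Q"
    obtain q0 where "q0 \<in> Q" using \<open>Q \<noteq> {}\<close> by blast
    obtain B where "B > 0" and B: "\<And>q. q \<in> Q \<Longrightarrow> norm q \<le> B"
      using \<open>bounded Q\<close> unfolding bounded_pos by blast
    have approx: "\<exists>p\<in>P. dist p c \<le> 2 * B / real (Suc m)" for m
    proof -
      obtain p q' where "p \<in> P" "q' \<in> Q"
        and eq: "real (Suc m) *\<^sub>R c + q0 = real (Suc m) *\<^sub>R p + q'"
        using mdiff_msum_multiple[OF \<open>convex P\<close> c \<open>q0 \<in> Q\<close>] by blast
      have "real (Suc m) *\<^sub>R (c - p) = q' - q0"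
        using eq by (simp add: algebra_simps)
      then have "real (Suc m) * dist p c = norm (q' - q0)"
        by (metis dist_norm norm_minus_commute norm_scaleR abs_of_nat)
      also have "\<dots> \<le> 2 * B"
        using B[OF \<open>q' \<in> Q\<close>] B[OF \<open>q0 \<in> Q\<close>] norm_triangle_ineq4[of q' q0] by linarith
      finally show ?thesis
        using \<open>p \<in> P\<close> by (auto simp: field_simps)
    qed
    have "c \<in> closure P"
      unfolding closure_approachable
    proof (intro allI impI)
      fix e :: real assume "e > 0"
      obtain m :: nat where "2 * B / e < real m"
        using reals_Archimedean2 by blast
      then have "2 * B / real (Suc m) < e"
        using \<open>e > 0\<close> by (simp add: field_simps)
      then show "\<exists>p\<in>P. dist p c < e"
        using approx[of m] by (meson order_le_less_trans)
    qed
    then show "c \<in> P"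
      using \<open>closed P\<close> by simp
  qed
qed (rule subset_mdiff_msum)

lemma matpow_Suc_left: "matpow A (Suc k) = A ** matpow A k"
proof -
  have "A ** matpow A k = matpow A k ** A"
    by (induction k) (simp_all add: matrix_mul_assoc)
  then show ?thesis by simp
qed

lemma traj_Suc_first_input:
  "traj A b u 0 (Suc k) = u 0 *\<^sub>R (matpow A k *v b) + traj A b (\<lambda>j. u (Suc j)) 0 k"
proof (induction k)
  case 0
  then show ?case by simp
next
  case (Suc k)
  then show ?case
    by (simp add: matpow_Suc_left matrix_vector_mul_assoc[symmetric]
        matrix_vector_right_distrib matrix_vector_mult_scaleR del: matpow.simps)
qed

lemma reach_Suc:
  "reach A b U (Suc k) = msum ((\<lambda>v. v *\<^sub>R (matpow A k *v b)) ` U) (reach A b U k)"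
proof (intro equalityI subsetI)
  fix x assume "x \<in> reach A b U (Suc k)"
  then obtain u where u: "\<forall>j. u j \<in> U" and x: "x = traj A b u 0 (Suc k)"
    unfolding reach_def by blast
  have "traj A b (\<lambda>j. u (Suc j)) 0 k \<in> reach A b U k"
    using u unfolding reach_def by auto
  then show "x \<in> msum ((\<lambda>v. v *\<^sub>R (matpow A k *v b)) ` U) (reach A b U k)"
    using u unfolding x traj_Suc_first_input msum_def by blast
next
  fix x assume "x \<in> msum ((\<lambda>v. v *\<^sub>R (matpow A k *v b)) ` U) (reach A b U k)"
  then obtain v u where "v \<in> U" and u: "\<forall>j. u j \<in> U"
    and x: "x = v *\<^sub>R (matpow A k *v b) + traj A b u 0 k"
    unfolding msum_def reach_def by blast
  have "x = traj A b (case_nat v u) 0 (Suc k)"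
    unfolding x traj_Suc_first_input by simp
  moreover have "\<forall>j. case_nat v u j \<in> U"
    using \<open>v \<in> U\<close> u by (simp split: nat.split)
  ultimately show "x \<in> reach A b U (Suc k)"
    unfolding reach_def by blast
qed

lemma compact_reach:
  assumes "compact U"
  shows "compact (reach A b U k)"
proof (induction k)
  case 0
  have "reach A b U 0 \<subseteq> {0}"
    unfolding reach_def by auto
  then show ?case
    by (meson finite.emptyI finite_insert finite_imp_compact finite_subset)
next
  case (Suc k)
  have "compact ((\<lambda>v. v *\<^sub>R (matpow A k *v b)) ` U)"
    using assms by (intro compact_continuous_image continuous_intros)
  then show ?case
    unfolding reach_Suc msum_def using Suc by (rule compact_sums)
qed

lemma reach_nonempty:
  assumes "U \<noteq> {}"
  shows "reach A b U k \<noteq> {}"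
proof -
  obtain v where "v \<in> U" using assms by blast
  then have "traj A b (\<lambda>_. v) 0 k \<in> reach A b U k"
    unfolding reach_def by auto
  then show ?thesis by blast
qed

theorem theorem1:
  fixes A :: "real^'n^'n" and b :: "real^'n" and ulo uhi :: real and i :: nat
  assumes "ulo < uhi" and "i \<ge> 1"
  shows "(\<lambda>v. v *\<^sub>R (matpow A (i - 1) *v b)) ` {ulo..uhi}
         = mdiff (reach A b {ulo..uhi} i) (reach A b {ulo..uhi} (i - 1))"
proof -
  obtain k where i: "i = Suc k"
    using assms(2) by (cases i) auto
  let ?P = "(\<lambda>v. v *\<^sub>R (matpow A k *v b)) ` {ulo..uhi}"
  have "compact ?P"
    by (intro compact_continuous_image continuous_intros) auto
  moreover have "convex ?P"
    by (intro convex_linear_image linear_scaleR_left) simp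
  moreover have "bounded (reach A b {ulo..uhi} k)"
    by (intro compact_imp_bounded compact_reach) simp
  moreover have "reach A b {ulo..uhi} k \<noteq> {}"
    using assms(1) by (intro reach_nonempty) simp
  ultimately show ?thesis
    unfolding i reach_Suc by (simp add: mdiff_msum_cancel compact_imp_closed)
qed

end
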